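(* Let $p_k$ denote the $k$th prime and $S_n^{(\alpha)}=\sum_{k=1}^n p_k^{\alpha}$. Let $\alpha\geqslant 1$ and let $n$ be a positive integer with $n\geqslant 55$. Then $$\log S_n^{(\alpha)}>(\alpha+1)\log n.$$
   Context: $p_k$ is the $k$th prime ($p_1=2$), $S_n^{(\alpha)}=\sum_{k=1}^n p_k^{\alpha}$, and $\log$ is the natural logarithm. *)

theory Defs
  imports "HOL-Analysis.Analysis" "HOL-Computational_Algebra.Primes" "HOL-Library.Infinite_Set"
begin

(* p k = the k-th prime, 1-indexed: p 1 = 2, p 2 = 3, ... (p 0 is a junk value) *)
definition kth_prime :: "nat \<Rightarrow> nat" where
  "kth_prime k = enumerate {q::nat. prime q} (k - 1)"

definition S :: "real \<Rightarrow> nat \<Rightarrow> real" where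
  "S \<alpha> n = (\<Sum>k=1..n. real (kth_prime k) powr \<alpha>)"

end

theory Submission
  imports Defs
begin

text \<open>
  Primes from 5 on are odd and not divisible by 3, so no two of them lie in the same block
  {3q, 3q+1, 3q+2}; hence p_k \<ge> 3(k - 2), which is at least 5k/2 for k \<ge> 12.
  Comparing \<Sum>_{11<k\<le>n} k^\<alpha> with \<integral>_11^n t^\<alpha> dt then gives
  S \<ge> (5/2)^\<alpha> (n^(\<alpha>+1) - 11^(\<alpha>+1)) / (\<alpha>+1) \<ge> 5/4 (n^(\<alpha>+1) - 11^(\<alpha>+1)),
  which exceeds n^(\<alpha>+1) because n \<ge> 55 = 5 \<cdot> 11 forces 11^(\<alpha>+1) \<le> n^(\<alpha>+1) / 25.
\<close>

lemma prime_ge_5_coprime_6: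
  fixes p :: nat
  assumes "prime p" "5 \<le> p"
  shows "odd p \<and> \<not> 3 dvd p"
  using assms prime_odd_nat[of p] primes_dvd_imp_eq[of 3 p] by auto

lemma odd_not_dvd_3_div_3_less:
  fixes x y :: nat
  assumes "odd x" "odd y" "\<not> 3 dvd x" "x < y"
  shows "x div 3 < y div 3"
  using assms by presburger

lemma enumerate_primes_ge: "j + 2 \<le> enumerate {p::nat. prime p} j"
proof (induction j)
  case 0
  have "prime (enumerate {p::nat. prime p} 0)"
    using enumerate_in_set[OF primes_infinite] by simp
  then show ?case using prime_ge_2_nat by (metis add_0)
next
  case (Suc j)
  then show ?case using enumerate_mono[OF lessI primes_infinite, of j] by simp
qed

lemma enumerate_primes_ge_5:
  assumes "2 \<le> j"
  shows "5 \<le> enumerate {p::nat. prime p} j"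
proof -
  have "prime (enumerate {p::nat. prime p} j)"
    using enumerate_in_set[OF primes_infinite] by simp
  moreover have "\<not> prime (4::nat)" by simp
  ultimately have "enumerate {p::nat. prime p} j \<noteq> 4" by metis
  moreover have "4 \<le> enumerate {p::nat. prime p} j"
    using enumerate_primes_ge[of j] assms by simp
  ultimately show ?thesis by simp
qed

lemma enumerate_primes_div_3_ge:
  assumes "2 \<le> j"
  shows "j - 1 \<le> enumerate {p::nat. prime p} j div 3"
  using assms
proof (induction j rule: dec_induct)
  case base
  show ?case using enumerate_primes_ge_5[of 2] by simp
next
  case (step j)
  let ?P = "{p::nat. prime p}"
  have "enumerate ?P j div 3 < enumerate ?P (Suc j) div 3"
  proof (rule odd_not_dvd_3_div_3_less)
    show "enumerate ?P j < enumerate ?P (Suc j)"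
      using enumerate_mono[OF lessI primes_infinite] .
  qed (use prime_ge_5_coprime_6 enumerate_primes_ge_5 step.hyps
         enumerate_in_set[OF primes_infinite] in auto)
  with step.IH show ?case by simp
qed

lemma kth_prime_ge: "3 * (k - 2) \<le> kth_prime k"
proof (cases "3 \<le> k")
  case True
  then have "k - 1 - 1 \<le> enumerate {p::nat. prime p} (k - 1) div 3"
    by (intro enumerate_primes_div_3_ge) simp
  then show ?thesis unfolding kth_prime_def by linarith
qed simp

lemma powr_add_one_diff_le:
  fixes r x :: real
  assumes "1 \<le> r" "0 < x"
  shows "(x + 1) powr r - x powr r \<le> r * (x + 1) powr (r - 1)"
proof -
  obtain z where z: "x < z" "z < x + 1" "(x + 1) powr r - x powr r = r * z powr (r - 1)"
    using MVT2[of x "x + 1" "\<lambda>t. t powr r" "\<lambda>t. r * t powr (r - 1)"]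
      has_real_derivative_powr assms by force
  have "z powr (r - 1) \<le> (x + 1) powr (r - 1)"
    using z assms by (intro powr_mono2) auto
  with z assms show ?thesis by simp
qed

lemma sum_powr_ge_integral:
  fixes a :: real
  assumes "0 \<le> a" "1 \<le> m" "m \<le> n"
  shows "(real n powr (a + 1) - real m powr (a + 1)) / (a + 1) \<le> (\<Sum>k\<in>{m<..n}. real k powr a)"
  using assms(3)
proof (induction n rule: dec_induct)
  case (step n)
  have "(real n + 1) powr (a + 1) - real n powr (a + 1) \<le> (a + 1) * (real n + 1) powr a"
    using powr_add_one_diff_le[of "a + 1" "real n"] assms step.hyps by simp
  then have "(real (Suc n) powr (a + 1) - real n powr (a + 1)) / (a + 1) \<le> real (Suc n) powr a"
    using assms by (simp add: divide_le_eq algebra_simps)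
  with step.IH have "(real (Suc n) powr (a + 1) - real m powr (a + 1)) / (a + 1)
      \<le> (\<Sum>k\<in>{m<..n}. real k powr a) + real (Suc n) powr a"
    by (simp add: diff_divide_distrib)
  also have "\<dots> = (\<Sum>k\<in>{m<..Suc n}. real k powr a)"
  proof -
    have "{m<..Suc n} = insert (Suc n) {m<..n}" using step.hyps by auto
    then show ?thesis by simp
  qed
  finally show ?case .
qed simp

lemma powr_ge_tangent_at_one:
  fixes a b :: real
  assumes "0 < b"
  shows "b * (1 + (a - 1) * ln b) \<le> b powr a"
proof -
  have "b powr a = b * exp ((a - 1) * ln b)"
    using assms by (simp add: powr_def exp_diff left_diff_distrib)
  with assms show ?thesis
    by (simp add: exp_ge_add_one_self)
qed

lemma five_halves_powr_ge:
  fixes a :: real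
  assumes "1 \<le> a"
  shows "5/4 * (a + 1) \<le> (5/2) powr a"
proof -
  have "2/3 \<le> ln (5/2 :: real)"
    using ln2_ge_two_thirds ln_le_cancel_iff[of 2 "5/2 :: real"] by linarith
  then have "5/4 * (a + 1) \<le> 5/2 * (1 + (a - 1) * ln (5/2))"
    using assms mult_left_mono[of "2/3" "ln (5/2)" "a - 1"] by simp
  also have "\<dots> \<le> (5/2) powr a"
    by (rule powr_ge_tangent_at_one) simp
  finally show ?thesis .
qed

lemma S_ge_sum_powr:
  assumes "0 \<le> \<alpha>"
  shows "(5/2) powr \<alpha> * (\<Sum>k\<in>{11<..n}. real k powr \<alpha>) \<le> S \<alpha> n"
proof -
  have "(5/2) powr \<alpha> * (\<Sum>k\<in>{11<..n}. real k powr \<alpha>) = (\<Sum>k\<in>{11<..n}. (5/2 * real k) powr \<alpha>)"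
    unfolding sum_distrib_left by (intro sum.cong refl) (simp only: powr_mult)
  also have "\<dots> \<le> (\<Sum>k\<in>{11<..n}. real (kth_prime k) powr \<alpha>)"
  proof (rule sum_mono)
    fix k assume "k \<in> {11<..n}"
    then have "real (3 * (k - 2)) = 3 * real k - 6" "11 < k"
      by (auto simp: of_nat_diff)
    then have "5/2 * real k \<le> real (kth_prime k)"
      using of_nat_mono[OF kth_prime_ge[of k], where 'a=real] by linarith
    with assms show "(5/2 * real k) powr \<alpha> \<le> real (kth_prime k) powr \<alpha>"
      by (intro powr_mono2) auto
  qed
  also have "\<dots> \<le> S \<alpha> n"
    unfolding S_def by (rule sum_mono2) auto
  finally show ?thesis .
qed

lemma powr_ge_25_times_11_powr:
  fixes a :: real
  assumes "1 \<le> a" "55 \<le> n"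
  shows "25 * 11 powr (a + 1) \<le> real n powr (a + 1)"
proof -
  have "25 * 11 powr (a + 1) \<le> 5 powr (a + 1) * 11 powr (a + 1)"
    using assms powr_mono[of 2 "a + 1" "5 :: real"] by (simp add: powr_numeral)
  also have "\<dots> = 55 powr (a + 1)"
    by (simp flip: powr_mult)
  also have "\<dots> \<le> real n powr (a + 1)"
    using assms by (intro powr_mono2) auto
  finally show ?thesis .
qed

theorem lemma3p2:
  fixes \<alpha> :: real and n :: nat
  assumes "\<alpha> \<ge> 1" and "n \<ge> 55"
  shows "ln (S \<alpha> n) > (\<alpha> + 1) * ln (real n)"
proof -
  define N M where "N = real n powr (\<alpha> + 1)" and "M = (11::real) powr (\<alpha> + 1)"
  have integral_bound: "(N - M) / (\<alpha> + 1) \<le> (\<Sum>k\<in>{11<..n}. real k powr \<alpha>)"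
    unfolding N_def M_def using sum_powr_ge_integral[of \<alpha> 11 n] assms by simp
  have "25 * M \<le> N" "0 < M"
    unfolding N_def M_def using powr_ge_25_times_11_powr assms by auto
  then have "N < 5/4 * (N - M)" by simp
  also have "\<dots> = 5/4 * (\<alpha> + 1) * ((N - M) / (\<alpha> + 1))"
    using assms by (simp add: field_simps)
  also have "\<dots> \<le> (5/2) powr \<alpha> * (\<Sum>k\<in>{11<..n}. real k powr \<alpha>)"
    using integral_bound five_halves_powr_ge \<open>25 * M \<le> N\<close> \<open>0 < M\<close> assms by (intro mult_mono) auto
  also have "\<dots> \<le> S \<alpha> n"
    using S_ge_sum_powr assms by simp
  finally have "N < S \<alpha> n" .
  moreover have "0 < N"
    unfolding N_def using assms by simp
  ultimately have "ln N < ln (S \<alpha> n)"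
    by simp
  then show ?thesis
    unfolding N_def using assms by (simp add: ln_powr)
qed

end
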